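(* Let $(\mathcal{J}_g)_{g\in[G]}$ be a partition of $[p]$ into nonempty sets, $p_g=|\mathcal{J}_g|$, and let $\mathcal{S}=\{M\in\mathbb{R}^{p\times(n-1)}:\|M\|_{\mathrm F}\le1\}$. For $T\in\mathbb{R}^{p\times(n-1)}$ and $\lambda>0$ define $R^*\in\mathbb{R}^{p\times(n-1)}$ by $R^*_{\mathcal{J}_g,t}=T_{\mathcal{J}_g,t}\min\bigl\{\lambda p_g^{1/2}/\|T_{\mathcal{J}_g,t}\|_2,1\bigr\}$ (with $R^*_{\mathcal{J}_g,t}=0$ if $T_{\mathcal{J}_g,t}=0$), and assume $T\ne R^*$. Then \[ \operatorname*{argmax}_{M\in\mathcal{S}}\bigl\{\langle T,M\rangle-\lambda\|M\|_{\mathrm{grp}}\bigr\}=\Bigl\{\frac{T-R^*}{\|T-R^*\|_{\mathrm F}}\Bigr\}. \]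
   Context: $\|M\|_{\mathrm{grp}}=\sum_{g=1}^Gp_g^{1/2}\sum_{t=1}^{n-1}\|M_{\mathcal{J}_g,t}\|_2$, where $M_{\mathcal{J}_g,t}$ is the vector of entries of the $t$th column of $M$ with rows in $\mathcal{J}_g$; $\langle A,B\rangle=\mathrm{tr}(A^\top B)$. *)

theory Defs
  imports "HOL-Analysis.Analysis"
begin

text \<open>Matrices in R^{p x (n-1)} are rendered as real ^ 'c ^ 'p, rows indexed by the finite
type 'p (so p = CARD('p)), columns by the finite type 'c (so n-1 = CARD('c)).
On this type, norm is the Frobenius norm and the inner product is tr(A^T B).\<close>

definition is_row_partition :: "'p::finite set set \<Rightarrow> bool" where
  "is_row_partition P \<longleftrightarrow> (\<forall>g\<in>P. g \<noteq> {}) \<and> \<Union>P = UNIV \<and>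
     (\<forall>g\<in>P. \<forall>h\<in>P. g \<noteq> h \<longrightarrow> g \<inter> h = {})"

definition block_norm :: "real ^ 'c ^ 'p \<Rightarrow> 'p set \<Rightarrow> 'c \<Rightarrow> real" where
  "block_norm M g t = sqrt (\<Sum>j\<in>g. (M $ j $ t)^2)"

definition grp_norm :: "'p::finite set set \<Rightarrow> real ^ 'c::finite ^ 'p \<Rightarrow> real" where
  "grp_norm P M = (\<Sum>g\<in>P. sqrt (real (card g)) * (\<Sum>t\<in>UNIV. block_norm M g t))"

definition group_of :: "'p set set \<Rightarrow> 'p \<Rightarrow> 'p set" where
  "group_of P j = (THE g. g \<in> P \<and> j \<in> g)"

definition Rstar :: "'p::finite set set \<Rightarrow> real \<Rightarrow> real ^ 'c::finite ^ 'p \<Rightarrow> real ^ 'c ^ 'p" where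
  "Rstar P lam T = (\<chi> j t. let g = group_of P j in
      if block_norm T g t = 0 then 0
      else T $ j $ t * min (lam * sqrt (real (card g)) / block_norm T g t) 1)"

definition unit_frob_ball :: "(real ^ 'c::finite ^ 'p::finite) set" where
  "unit_frob_ball = {M. norm M \<le> 1}"

end

(*
  Write R for Rstar P lam T and split T = (T - R) + R. Blockwise Cauchy-Schwarz gives
  <R, M> <= lam * |M|_grp for all M, since every block of R has norm at most lam * sqrt p_g.
  Each block of R is moreover a nonnegative multiple of the corresponding block of T - R, of norm
  exactly lam * sqrt p_g whenever that block is nonzero, so equality holds at M = T - R. Hence on
  the unit ball the objective is bounded by <T - R, M> <= |T - R|_F, with equality at the
  normalised residual, and equality in Cauchy-Schwarz on the unit ball makes it the only maximiser.
*)
theory Submission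
  imports Defs
begin

lemma unit_ball_inner_ge_norm_imp_eq_sgn:
  fixes D M :: "'a::real_inner"
  assumes "D \<noteq> 0" and "norm M \<le> 1" and "norm D \<le> inner D M"
  shows "M = sgn D"
proof -
  have "(norm (M - sgn D))\<^sup>2 = (norm M)\<^sup>2 - 2 * inner M (sgn D) + (norm (sgn D))\<^sup>2"
    by (simp add: power2_norm_eq_inner inner_diff_left inner_diff_right inner_commute)
  also have "inner M (sgn D) = inner D M / norm D"
    by (simp add: sgn_div_norm inner_commute divide_inverse)
  also have "(norm (sgn D))\<^sup>2 = 1"
    using assms(1) by (simp add: norm_sgn)
  also have "(norm M)\<^sup>2 - 2 * (inner D M / norm D) + 1 \<le> 0"
  proof -
    have "1 \<le> inner D M / norm D"
      using assms(1,3) by simp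
    moreover have "(norm M)\<^sup>2 \<le> 1"
      using assms(2) by (simp add: abs_square_le_1)
    ultimately show ?thesis by simp
  qed
  finally show ?thesis by simp
qed

lemma unit_ball_argmax_dominated_by_inner:
  fixes D :: "'a::real_inner"
  assumes "D \<noteq> 0" and "\<And>M. f M \<le> inner D M" and "f (sgn D) = norm D"
  shows "{M \<in> {M. norm M \<le> 1}. \<forall>M'\<in>{M. norm M \<le> 1}. f M' \<le> f M} = {sgn D}"
proof (intro equalityI subsetI)
  fix M assume "M \<in> {M \<in> {M. norm M \<le> 1}. \<forall>M'\<in>{M. norm M \<le> 1}. f M' \<le> f M}"
  then have "norm M \<le> 1" and "f (sgn D) \<le> f M"
    by (auto simp: norm_sgn)
  then show "M \<in> {sgn D}"
    using unit_ball_inner_ge_norm_imp_eq_sgn[OF assms(1)] assms(2)[of M] assms(3) by simp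
next
  have "f M \<le> f (sgn D)" if "norm M \<le> 1" for M
    using assms(2)[of M] assms(3) norm_cauchy_schwarz[of D M] mult_left_le[OF that, of "norm D"]
    by simp
  then show "M \<in> {M \<in> {M. norm M \<le> 1}. \<forall>M'\<in>{M. norm M \<le> 1}. f M' \<le> f M}"
    if "M \<in> {sgn D}" for M
    using that by (simp add: norm_sgn assms(1))
qed

text \<open>As c / 0 = 0, shrink c 0 = 0: this absorbs the zero-block case of Rstar.\<close>

definition shrink :: "real \<Rightarrow> real \<Rightarrow> real" where
  "shrink c b = min (c / b) 1"

lemma shrink_nonneg: "0 \<le> c \<Longrightarrow> 0 \<le> b \<Longrightarrow> 0 \<le> shrink c b"
  unfolding shrink_def by simp

lemma shrink_le_1: "shrink c b \<le> 1"
  unfolding shrink_def by simp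

lemma shrink_mult_le: "0 \<le> c \<Longrightarrow> 0 \<le> b \<Longrightarrow> shrink c b * b \<le> c"
  unfolding shrink_def by (cases "b = 0") (auto simp: min_def field_simps)

lemma shrink_complementary_slackness:
  assumes "0 \<le> b"
  shows "shrink c b * (1 - shrink c b) * b\<^sup>2 = c * (1 - shrink c b) * b"
proof (cases "b = 0 \<or> 1 \<le> c / b")
  case True
  then show ?thesis unfolding shrink_def by auto
next
  case False
  then have "shrink c b * b = c"
    unfolding shrink_def by simp
  then show ?thesis by (simp add: power2_eq_square algebra_simps)
qed

definition block_inner :: "real ^ 'c ^ 'p \<Rightarrow> real ^ 'c ^ 'p \<Rightarrow> 'p set \<Rightarrow> 'c \<Rightarrow> real" where
  "block_inner A B g t = (\<Sum>j\<in>g. A $ j $ t * B $ j $ t)"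

lemma block_norm_nonneg: "0 \<le> block_norm M g t"
  unfolding block_norm_def by (simp add: sum_nonneg)

lemma block_inner_self: "block_inner M M g t = (block_norm M g t)\<^sup>2"
  unfolding block_inner_def block_norm_def by (simp add: sum_nonneg power2_eq_square)

lemma block_inner_le_block_norm: "block_inner A B g t \<le> block_norm A g t * block_norm B g t"
proof -
  have "block_inner A B g t \<le> (\<Sum>j\<in>g. \<bar>A $ j $ t\<bar> * \<bar>B $ j $ t\<bar>)"
    unfolding block_inner_def by (rule sum_mono) (metis abs_ge_self abs_mult)
  also have "\<dots> \<le> L2_set (\<lambda>j. A $ j $ t) g * L2_set (\<lambda>j. B $ j $ t) g"
    by (rule L2_set_mult_ineq)
  finally show ?thesis unfolding block_norm_def L2_set_def .
qed

lemma block_inner_scaled_left: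
  assumes "\<And>j. j \<in> g \<Longrightarrow> A $ j $ t = a * B $ j $ t"
  shows "block_inner A C g t = a * block_inner B C g t"
  unfolding block_inner_def sum_distrib_left by (rule sum.cong) (simp_all add: assms)

lemma block_norm_scaled:
  assumes "\<And>j. j \<in> g \<Longrightarrow> M $ j $ t = a * N $ j $ t"
  shows "block_norm M g t = \<bar>a\<bar> * block_norm N g t"
proof -
  have "(\<Sum>j\<in>g. (M $ j $ t)\<^sup>2) = a\<^sup>2 * (\<Sum>j\<in>g. (N $ j $ t)\<^sup>2)"
    using assms by (simp add: sum_distrib_left power_mult_distrib)
  then show ?thesis unfolding block_norm_def by (simp add: real_sqrt_mult)
qed

lemma block_norm_scaleR: "block_norm (a *\<^sub>R M) g t = \<bar>a\<bar> * block_norm M g t"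
  by (rule block_norm_scaled) simp

lemma grp_norm_scaleR: "grp_norm P (a *\<^sub>R M) = \<bar>a\<bar> * grp_norm P M"
  unfolding grp_norm_def by (simp add: block_norm_scaleR sum_distrib_left mult_ac)

lemma group_of_eq:
  assumes "is_row_partition P" "g \<in> P" "j \<in> g"
  shows "group_of P j = g"
  unfolding group_of_def
proof (rule the_equality)
  show "g \<in> P \<and> j \<in> g" using assms by auto
  fix h assume "h \<in> P \<and> j \<in> h"
  then show "h = g" using assms unfolding is_row_partition_def by blast
qed

lemma sum_row_partition:
  fixes h :: "'p::finite \<Rightarrow> 'a::comm_monoid_add"
  assumes "is_row_partition P"
  shows "sum h UNIV = (\<Sum>g\<in>P. sum h g)"
proof -
  have "UNIV = \<Union>P" and "finite P"
    using assms unfolding is_row_partition_def by (auto intro: finite_subset)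
  then show ?thesis
    using sum.Union_disjoint[of P h] assms unfolding is_row_partition_def by auto
qed

lemma inner_eq_sum_block_inner:
  fixes A B :: "real ^ 'c::finite ^ 'p::finite"
  assumes "is_row_partition P"
  shows "inner A B = (\<Sum>g\<in>P. \<Sum>t\<in>UNIV. block_inner A B g t)"
proof -
  have "inner A B = (\<Sum>j\<in>UNIV. \<Sum>t\<in>UNIV. A $ j $ t * B $ j $ t)"
    by (simp add: inner_vec_def)
  also have "\<dots> = (\<Sum>g\<in>P. \<Sum>j\<in>g. \<Sum>t\<in>UNIV. A $ j $ t * B $ j $ t)"
    by (rule sum_row_partition[OF assms])
  also have "\<dots> = (\<Sum>g\<in>P. \<Sum>t\<in>UNIV. block_inner A B g t)"
    unfolding block_inner_def by (simp add: sum.swap[of _ _ UNIV])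
  finally show ?thesis .
qed

lemma Rstar_block:
  assumes "is_row_partition P" "g \<in> P" "j \<in> g"
  shows "Rstar P lam T $ j $ t = shrink (lam * sqrt (real (card g))) (block_norm T g t) * T $ j $ t"
  using group_of_eq[OF assms] unfolding Rstar_def shrink_def Let_def by simp

lemma residual_block:
  assumes "is_row_partition P" "g \<in> P" "j \<in> g"
  shows "(T - Rstar P lam T) $ j $ t
    = (1 - shrink (lam * sqrt (real (card g))) (block_norm T g t)) * T $ j $ t"
  using Rstar_block[OF assms] by (simp add: left_diff_distrib)

lemma block_inner_Rstar_le:
  assumes "is_row_partition P" "g \<in> P" "0 \<le> lam"
  shows "block_inner (Rstar P lam T) M g t \<le> lam * sqrt (real (card g)) * block_norm M g t"
proof -
  let ?c = "lam * sqrt (real (card g))" and ?b = "block_norm T g t"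
  have "block_inner (Rstar P lam T) M g t = shrink ?c ?b * block_inner T M g t"
    by (rule block_inner_scaled_left) (rule Rstar_block[OF assms(1,2)])
  also have "\<dots> \<le> shrink ?c ?b * (?b * block_norm M g t)"
    using assms(3) block_norm_nonneg
    by (intro mult_left_mono block_inner_le_block_norm shrink_nonneg) simp_all
  also have "\<dots> \<le> ?c * block_norm M g t"
    unfolding mult.assoc[symmetric] using assms(3) block_norm_nonneg
    by (intro mult_right_mono shrink_mult_le) simp_all
  finally show ?thesis .
qed

lemma block_inner_Rstar_residual:
  assumes "is_row_partition P" "g \<in> P" "0 \<le> lam"
  shows "block_inner (Rstar P lam T) (T - Rstar P lam T) g t
    = lam * sqrt (real (card g)) * block_norm (T - Rstar P lam T) g t"
proof -
  let ?c = "lam * sqrt (real (card g))" and ?b = "block_norm T g t"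
  let ?k = "shrink ?c ?b"
  have "block_inner (Rstar P lam T) (T - Rstar P lam T) g t
      = ?k * (1 - ?k) * block_inner T T g t"
    unfolding block_inner_def sum_distrib_left
    by (intro sum.cong) (simp_all add: Rstar_block[OF assms(1,2)] algebra_simps)
  also have "\<dots> = ?c * (1 - ?k) * ?b"
    by (simp add: block_inner_self shrink_complementary_slackness block_norm_nonneg)
  also have "\<dots> = ?c * block_norm (T - Rstar P lam T) g t"
    using block_norm_scaled[where M = "T - Rstar P lam T" and N = T, OF residual_block[OF assms(1,2)]]
      shrink_le_1[of ?c ?b]
    by simp
  finally show ?thesis .
qed

lemma lam_grp_norm_eq_sum_blocks:
  "lam * grp_norm P M = (\<Sum>g\<in>P. \<Sum>t\<in>UNIV. lam * sqrt (real (card g)) * block_norm M g t)"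
  unfolding grp_norm_def by (simp add: sum_distrib_left mult.assoc)

lemma inner_Rstar_le_grp_norm:
  fixes T M :: "real ^ 'c::finite ^ 'p::finite"
  assumes "is_row_partition P" "0 \<le> lam"
  shows "inner (Rstar P lam T) M \<le> lam * grp_norm P M"
  unfolding inner_eq_sum_block_inner[OF assms(1)] lam_grp_norm_eq_sum_blocks
  using block_inner_Rstar_le[OF assms(1) _ assms(2)] by (intro sum_mono) auto

lemma inner_Rstar_residual:
  fixes T :: "real ^ 'c::finite ^ 'p::finite"
  assumes "is_row_partition P" "0 \<le> lam"
  shows "inner (Rstar P lam T) (T - Rstar P lam T) = lam * grp_norm P (T - Rstar P lam T)"
  unfolding inner_eq_sum_block_inner[OF assms(1)] lam_grp_norm_eq_sum_blocks
  using block_inner_Rstar_residual[OF assms(1) _ assms(2)] by (intro sum.cong) auto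

theorem mainTheorem5:
  fixes P :: "'p::finite set set" and T :: "real ^ 'c::finite ^ 'p" and lam :: real
  assumes "is_row_partition P"
    and "lam > 0"
    and "T \<noteq> Rstar P lam T"
  shows "{M \<in> unit_frob_ball. \<forall>M'\<in>unit_frob_ball.
            inner T M' - lam * grp_norm P M' \<le> inner T M - lam * grp_norm P M}
         = {(1 / norm (T - Rstar P lam T)) *\<^sub>R (T - Rstar P lam T)}"
proof -
  define R where "R = Rstar P lam T"
  define f where "f M = inner T M - lam * grp_norm P M" for M
  have split: "f M = inner (T - R) M + (inner R M - lam * grp_norm P M)" for M
    unfolding f_def by (simp add: inner_diff_left)
  have "T - R \<noteq> 0"
    using assms(3) unfolding R_def by simp
  moreover have "f M \<le> inner (T - R) M" for M
    using split[of M] inner_Rstar_le_grp_norm[OF assms(1), of lam T M] assms(2)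
    unfolding R_def by simp
  moreover have "f (sgn (T - R)) = norm (T - R)"
  proof -
    have "inner R (sgn (T - R)) = lam * grp_norm P (sgn (T - R))"
      using inner_Rstar_residual[OF assms(1), of lam T] assms(2)
      by (simp add: R_def sgn_div_norm grp_norm_scaleR)
    then have "f (sgn (T - R)) = inner (T - R) (sgn (T - R))"
      by (simp add: split)
    also have "\<dots> = norm (T - R)"
      using \<open>T - R \<noteq> 0\<close> by (simp add: sgn_div_norm dot_square_norm power2_eq_square)
    finally show ?thesis .
  qed
  ultimately have "{M \<in> {M. norm M \<le> 1}. \<forall>M'\<in>{M. norm M \<le> 1}. f M' \<le> f M} = {sgn (T - R)}"
    by (rule unit_ball_argmax_dominated_by_inner)
  then show ?thesis
    unfolding unit_frob_ball_def f_def R_def by (simp add: sgn_div_norm divide_inverse)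
qed

end
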